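(* Let $H=\mathbb{R}^N$ with the Euclidean inner product $(\cdot,\cdot)$. Let $B$ be a symmetric positive definite $N\times N$ matrix, and let $A = A_1 + A_2$ where $A_1, A_2$ are symmetric positive semidefinite $N\times N$ matrices. For a symmetric positive definite matrix $D$ write $\|z\|_D = (Dz,z)^{1/2}$. Let $\sigma \ge 1/2$ and $\tau>0$ be arbitrary, and let $(\varphi^n)_{n\ge 0}\subset \mathbb{R}^N$ be given. Suppose $(y^n)_{n\ge 0}\subset\mathbb{R}^N$ satisfies the factorized scheme \[ (B + \sigma \tau A_1)\, B^{-1}\, (B + \sigma \tau A_2)\, \frac{y^{n+1} - y^{n}}{\tau} + A y^{n} = \varphi^n, \qquad n = 0,1,2,\dots \] Then the scheme is unconditionally stable (i.e., stable for every $\tau>0$), and for every $n\ge 0$, \[ \|(B + \sigma \tau A_2)\, y^{n+1}\|_{B^{-1}} \le \|(B + \sigma \tau A_2)\, y^{n}\|_{B^{-1}} + \tau \|\varphi^n\|_{B^{-1}}. \]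
   Context: This scheme arises as a two-subdomain domain decomposition (regionally additive) time discretization of $B\,\frac{dy}{dt} + Ay = \varphi(t)$, where $B$ is a finite element mass matrix, $A$ the stiffness matrix, and $A_\alpha$ ($\alpha=1,2$) are the stiffness contributions weighted by a partition of unity $\eta_1+\eta_2=1$ subordinate to overlapping subdomains. $\tau$ is the time step and $\sigma$ a weight parameter ($\sigma=1/2$: Peaceman–Rachford type; $\sigma=1$: Douglas–Rachford type). *)

theory Defs
  imports "HOL-Analysis.Analysis"
begin

definition sym_mat :: "real^'n^'n \<Rightarrow> bool" where
  "sym_mat M \<longleftrightarrow> transpose M = M"

definition pos_def_mat :: "real^'n^'n \<Rightarrow> bool" where
  "pos_def_mat M \<longleftrightarrow> sym_mat M \<and> (\<forall>x. x \<noteq> 0 \<longrightarrow> (M *v x) \<bullet> x > 0)"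

definition pos_semidef_mat :: "real^'n^'n \<Rightarrow> bool" where
  "pos_semidef_mat M \<longleftrightarrow> sym_mat M \<and> (\<forall>x. (M *v x) \<bullet> x \<ge> 0)"

definition dnorm :: "real^'n^'n \<Rightarrow> real^'n \<Rightarrow> real" where
  "dnorm D z = sqrt ((D *v z) \<bullet> z)"

end

theory Submission imports Defs begin

text \<open>Put \<open>G = B\<^sup>-\<^sup>1\<close>, \<open>P\<^sub>i = B + \<sigma>\<tau> A\<^sub>i\<close>, \<open>z\<^sup>n = P\<^sub>2 y\<^sup>n\<close>, so that the scheme reads
  \<open>z\<^sup>n\<^sup>+\<^sup>1 = z\<^sup>n + B d\<close> with \<open>P\<^sub>1 d = \<tau> (\<phi>\<^sup>n - A y\<^sup>n)\<close>. Expanding \<open>\<parallel>(B \<plusminus> c A) x\<parallel>\<^sub>G\<^sup>2\<close> shows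
  that \<open>q \<mapsto> B q\<close> and the Cayley transforms \<open>(B - c A\<^sub>i) P\<^sub>i\<^sup>-\<^sup>1\<close> are \<open>G\<close>-contractions
  relative to \<open>P\<^sub>i\<close>. The source term therefore contributes at most \<open>\<tau> \<parallel>\<phi>\<^sup>n\<parallel>\<^sub>G\<close>, and the
  homogeneous update equals \<open>(1 - \<theta>) z\<^sup>n + \<theta> t\<close> with \<open>\<theta> = 1/(2\<sigma>) \<in> (0,1]\<close>, where
  \<open>t = (B - \<sigma>\<tau>A\<^sub>1) P\<^sub>1\<^sup>-\<^sup>1 (B - \<sigma>\<tau>A\<^sub>2) y\<^sup>n\<close> is the image of \<open>z\<^sup>n\<close> under two such contractions;
  convexity of the norm finishes the argument.\<close>

lemma sym_mat_inner_commute: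
  "sym_mat M \<Longrightarrow> (M *v x) \<bullet> y = x \<bullet> (M *v y)"
  unfolding sym_mat_def by (metis dot_lmul_matrix transpose_matrix_vector)

lemma pos_def_mat_matrix_inv_mult:
  fixes M :: "real^'n^'n"
  assumes "pos_def_mat M"
  shows "M ** matrix_inv M = mat 1" "matrix_inv M ** M = mat 1"
proof -
  have "\<forall>x. M *v x = 0 \<longrightarrow> x = 0"
    using assms unfolding pos_def_mat_def by (metis inner_zero_left less_irrefl)
  then have "invertible M"
    using matrix_left_invertible_ker invertible_left_inverse by blast
  then have "M ** matrix_inv M = mat 1 \<and> matrix_inv M ** M = mat 1"
    unfolding invertible_def matrix_inv_def by (rule someI_ex)
  then show "M ** matrix_inv M = mat 1" "matrix_inv M ** M = mat 1" by auto
qed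

lemma pos_def_mat_surj:
  fixes M :: "real^'n^'n"
  assumes "pos_def_mat M"
  obtains x where "M *v x = u"
  using pos_def_mat_matrix_inv_mult(1)[OF assms]
  by (metis matrix_vector_mul_assoc matrix_vector_mul_lid)

lemma pos_def_mat_matrix_inv:
  fixes B :: "real^'n^'n"
  assumes B: "pos_def_mat B"
  shows "pos_def_mat (matrix_inv B)"
proof -
  let ?G = "matrix_inv B"
  have BG: "B ** ?G = mat 1" using pos_def_mat_matrix_inv_mult[OF B] by auto
  have "transpose ?G ** B = mat 1"
    using B unfolding pos_def_mat_def sym_mat_def
    by (metis BG matrix_transpose_mul transpose_mat)
  then have "transpose ?G = ?G"
    by (metis BG matrix_mul_assoc matrix_mul_lid matrix_mul_rid)
  moreover have "(?G *v x) \<bullet> x > 0" if "x \<noteq> 0" for x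
  proof -
    have x: "x = B *v (?G *v x)" by (simp add: matrix_vector_mul_assoc BG)
    then have "?G *v x \<noteq> 0" using that by (metis matrix_vector_mult_0_right)
    then have "(B *v (?G *v x)) \<bullet> (?G *v x) > 0" using B unfolding pos_def_mat_def by blast
    then show ?thesis using x by (simp add: inner_commute)
  qed
  ultimately show ?thesis unfolding pos_def_mat_def sym_mat_def by auto
qed

lemma transpose_add: "transpose (A + B) = transpose A + (transpose B :: real^'n^'m)"
  by (simp add: transpose_def vec_eq_iff)

lemma pos_def_mat_add_pos_semidef:
  fixes B A :: "real^'n^'n"
  assumes "pos_def_mat B" "pos_semidef_mat A" "c \<ge> 0"
  shows "pos_def_mat (B + c *\<^sub>R A)"
  using assms unfolding pos_def_mat_def pos_semidef_mat_def sym_mat_def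
  by (auto simp: transpose_add transpose_scalar matrix_vector_mult_add_rdistrib
      scaleR_matrix_vector_assoc[symmetric] inner_add_left
      intro!: add_pos_nonneg mult_nonneg_nonneg)

lemma inner_pos_def_mat_nonneg: "pos_def_mat G \<Longrightarrow> (G *v x) \<bullet> x \<ge> 0"
  unfolding pos_def_mat_def
  by (metis inner_zero_left less_eq_real_def matrix_vector_mult_0_right)

lemma inner_sym_mat_add_scaleR:
  fixes G :: "real^'n^'n"
  assumes "sym_mat G"
  shows "(G *v (a + c *\<^sub>R b)) \<bullet> (a + c *\<^sub>R b)
    = (G *v a) \<bullet> a + 2 * c * ((G *v a) \<bullet> b) + c\<^sup>2 * ((G *v b) \<bullet> b)"
  using sym_mat_inner_commute[OF assms, of a b]
  by (simp add: algebra_simps inner_add_left inner_add_right power2_eq_square inner_commute)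

lemma dnorm_scaleR: "dnorm G (c *\<^sub>R x) = \<bar>c\<bar> * dnorm G x"
  by (simp add: dnorm_def matrix_vector_mult_scaleR real_sqrt_mult)

lemma dnorm_triangle:
  fixes G :: "real^'n^'n"
  assumes G: "pos_def_mat G"
  shows "dnorm G (x + y) \<le> dnorm G x + dnorm G y"
proof -
  define g where "g a b = (G *v a) \<bullet> b" for a b
  have sym: "sym_mat G" using G unfolding pos_def_mat_def by simp
  have nn: "g a a \<ge> 0" for a
    unfolding g_def using inner_pos_def_mat_nonneg[OF G] .
  have exp: "g (a + t *\<^sub>R b) (a + t *\<^sub>R b) = g a a + 2 * t * g a b + t\<^sup>2 * g b b" for a b t
    unfolding g_def by (rule inner_sym_mat_add_scaleR[OF sym])
  have cauchy_schwarz: "(g x y)\<^sup>2 \<le> g x x * g y y"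
  proof (cases "y = 0")
    case True then show ?thesis by (simp add: g_def)
  next
    case False
    then have pos: "g y y > 0" using G unfolding g_def pos_def_mat_def by auto
    define t where "t = - g x y / g y y"
    have "0 \<le> g x x + 2 * t * g x y + t\<^sup>2 * g y y" using nn exp by metis
    also have "\<dots> = g x x - (g x y)\<^sup>2 / g y y" using pos unfolding t_def
      by (simp add: field_simps power2_eq_square)
    finally show ?thesis using pos by (simp add: field_simps)
  qed
  have "g x y \<le> sqrt (g x x) * sqrt (g y y)"
    by (metis cauchy_schwarz real_le_rsqrt real_sqrt_mult abs_ge_self order.trans real_sqrt_abs)
  then have "g (x + y) (x + y) \<le> (sqrt (g x x) + sqrt (g y y))\<^sup>2"
    using exp[of x 1 y] nn[of x] nn[of y] by (simp add: power2_sum)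
  then have "sqrt (g (x + y) (x + y)) \<le> sqrt (g x x) + sqrt (g y y)"
    using nn[of x] nn[of y] by (simp add: real_le_lsqrt)
  then show ?thesis unfolding dnorm_def g_def .
qed

lemma inner_matrix_inv_shift:
  fixes B A :: "real^'n^'n"
  assumes B: "pos_def_mat B" and A: "sym_mat A"
  defines "G \<equiv> matrix_inv B"
  shows "(G *v (B *v x + c *\<^sub>R (A *v x))) \<bullet> (B *v x + c *\<^sub>R (A *v x))
    = (B *v x) \<bullet> x + 2 * c * ((A *v x) \<bullet> x) + c\<^sup>2 * ((G *v (A *v x)) \<bullet> (A *v x))"
proof -
  have "sym_mat G" using pos_def_mat_matrix_inv[OF B] unfolding G_def pos_def_mat_def by simp
  moreover have "G *v (B *v x) = x"
    using pos_def_mat_matrix_inv_mult(2)[OF B] unfolding G_def by (simp add: matrix_vector_mul_assoc)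
  ultimately show ?thesis
    unfolding inner_sym_mat_add_scaleR[OF \<open>sym_mat G\<close>]
    by (simp add: inner_commute)
qed

lemma dnorm_matrix_inv_le_shift:
  fixes B A :: "real^'n^'n"
  assumes B: "pos_def_mat B" and A: "pos_semidef_mat A" and "c \<ge> 0"
  shows "dnorm (matrix_inv B) (B *v x) \<le> dnorm (matrix_inv B) ((B + c *\<^sub>R A) *v x)"
proof -
  have "(B + c *\<^sub>R A) *v x = B *v x + c *\<^sub>R (A *v x)"
    by (simp add: matrix_vector_mult_add_rdistrib scaleR_matrix_vector_assoc[symmetric])
  moreover have "0 \<le> 2 * c * ((A *v x) \<bullet> x) + c\<^sup>2 * ((matrix_inv B *v (A *v x)) \<bullet> (A *v x))"
    using A \<open>c \<ge> 0\<close> inner_pos_def_mat_nonneg[OF pos_def_mat_matrix_inv[OF B]]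
    unfolding pos_semidef_mat_def by simp
  ultimately show ?thesis
    using inner_matrix_inv_shift[OF B, of A x c] inner_matrix_inv_shift[OF B, of A x 0] A
    unfolding dnorm_def pos_semidef_mat_def by simp
qed

text \<open>\<open>(B + c A) x - 2 B x = -(B - c A) x\<close>: the Cayley transform \<open>(B - c A) (B + c A)\<^sup>-\<^sup>1\<close>
  is a contraction in the \<open>B\<^sup>-\<^sup>1\<close>-norm.\<close>

lemma dnorm_matrix_inv_cayley_le:
  fixes B A :: "real^'n^'n"
  assumes B: "pos_def_mat B" and A: "pos_semidef_mat A" and "c \<ge> 0"
  shows "dnorm (matrix_inv B) ((B + c *\<^sub>R A) *v x - 2 *\<^sub>R (B *v x))
    \<le> dnorm (matrix_inv B) ((B + c *\<^sub>R A) *v x)"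
proof -
  have plus: "(B + c *\<^sub>R A) *v x = B *v x + c *\<^sub>R (A *v x)"
    by (simp add: matrix_vector_mult_add_rdistrib scaleR_matrix_vector_assoc[symmetric])
  have minus: "(B + c *\<^sub>R A) *v x - 2 *\<^sub>R (B *v x) = (- 1) *\<^sub>R (B *v x + (- c) *\<^sub>R (A *v x))"
    unfolding plus by (simp add: algebra_simps scaleR_2)
  have "0 \<le> c * ((A *v x) \<bullet> x)"
    using A \<open>c \<ge> 0\<close> unfolding pos_semidef_mat_def by simp
  then have "(matrix_inv B *v (B *v x + (- c) *\<^sub>R (A *v x))) \<bullet> (B *v x + (- c) *\<^sub>R (A *v x))
      \<le> (matrix_inv B *v (B *v x + c *\<^sub>R (A *v x))) \<bullet> (B *v x + c *\<^sub>R (A *v x))"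
    using inner_matrix_inv_shift[OF B, of A x c] inner_matrix_inv_shift[OF B, of A x "- c"] A
    unfolding pos_semidef_mat_def by simp
  then show ?thesis
    unfolding minus dnorm_scaleR unfolding plus dnorm_def by simp
qed

lemma factorized_scheme_homogeneous_step:
  fixes B A1 A2 :: "real^'n^'n" and v :: "real^'n" and \<sigma> \<tau> :: real
  assumes B: "pos_def_mat B" and A1: "pos_semidef_mat A1" and A2: "pos_semidef_mat A2"
    and "\<sigma> \<ge> 1/2" and "\<tau> > 0"
  obtains q where "(B + (\<sigma> * \<tau>) *\<^sub>R A1) *v q = - \<tau> *\<^sub>R ((A1 + A2) *v v)"
    and "dnorm (matrix_inv B) ((B + (\<sigma> * \<tau>) *\<^sub>R A2) *v v + B *v q)
      \<le> dnorm (matrix_inv B) ((B + (\<sigma> * \<tau>) *\<^sub>R A2) *v v)"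
proof -
  define C where "C = \<sigma> * \<tau>"
  define G where "G = matrix_inv B"
  define \<theta> where "\<theta> = 1 / (2 * \<sigma>)"
  define z where "z = (B + C *\<^sub>R A2) *v v"
  define u where "u = z - 2 *\<^sub>R (B *v v)"
  have "C \<ge> 0" "0 < \<theta>" "\<theta> \<le> 1" "2 * \<theta> * C = \<tau>"
    unfolding C_def \<theta>_def using \<open>\<sigma> \<ge> 1/2\<close> \<open>\<tau> > 0\<close> by auto
  obtain \<beta> where \<beta>: "(B + C *\<^sub>R A1) *v \<beta> = u"
    using pos_def_mat_surj[OF pos_def_mat_add_pos_semidef[OF B A1 \<open>C \<ge> 0\<close>]] by blast
  define t where "t = u - 2 *\<^sub>R (B *v \<beta>)"
  have "dnorm G t \<le> dnorm G u"
    unfolding t_def G_def \<beta>[symmetric] by (rule dnorm_matrix_inv_cayley_le[OF B A1 \<open>C \<ge> 0\<close>])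
  also have "\<dots> \<le> dnorm G z"
    unfolding u_def z_def G_def by (rule dnorm_matrix_inv_cayley_le[OF B A2 \<open>C \<ge> 0\<close>])
  finally have "dnorm G t \<le> dnorm G z" .
  define q where "q = (- (2 * \<theta>)) *\<^sub>R (v + \<beta>)"
  have "(B + C *\<^sub>R A1) *v q = (- (2 * \<theta>)) *\<^sub>R ((B + C *\<^sub>R A1) *v v + u)"
    unfolding q_def \<beta>[symmetric] by (simp only: matrix_vector_mult_scaleR matrix_vector_right_distrib)
  also have "(B + C *\<^sub>R A1) *v v + u = C *\<^sub>R ((A1 + A2) *v v)"
    by (simp add: u_def z_def algebra_simps scaleR_matrix_vector_assoc[symmetric] scaleR_2)
  finally have P1q: "(B + C *\<^sub>R A1) *v q = - \<tau> *\<^sub>R ((A1 + A2) *v v)"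
    using \<open>2 * \<theta> * C = \<tau>\<close> by (simp add: algebra_simps)
  define w where "w = B *v v + B *v \<beta>"
  have t: "t = z - 2 *\<^sub>R w"
    by (simp add: t_def u_def w_def algebra_simps)
  have Bq: "B *v q = (- (2 * \<theta>)) *\<^sub>R w"
    by (simp only: q_def w_def matrix_vector_mult_scaleR matrix_vector_right_distrib)
  have "z + B *v q = (1 - \<theta>) *\<^sub>R z + \<theta> *\<^sub>R t"
    unfolding t Bq by (simp add: algebra_simps)
  then have "dnorm G (z + B *v q) \<le> dnorm G ((1 - \<theta>) *\<^sub>R z) + dnorm G (\<theta> *\<^sub>R t)"
    unfolding G_def by (simp add: dnorm_triangle pos_def_mat_matrix_inv[OF B])
  also have "\<dots> = (1 - \<theta>) * dnorm G z + \<theta> * dnorm G t"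
    using \<open>\<theta> \<le> 1\<close> \<open>0 < \<theta>\<close> by (simp add: dnorm_scaleR)
  also have "\<dots> \<le> dnorm G z"
    using \<open>dnorm G t \<le> dnorm G z\<close> \<open>0 < \<theta>\<close> by (simp add: algebra_simps)
  finally show ?thesis
    using that P1q unfolding z_def G_def C_def by blast
qed

lemma factorized_scheme_increment:
  fixes B P1 P2 A :: "real^'n^'n"
  assumes B: "pos_def_mat B" and "\<tau> > 0"
    and scheme: "(P1 ** matrix_inv B ** P2) *v ((1 / \<tau>) *\<^sub>R (w - v)) + A *v v = f"
  obtains d where "P2 *v w = P2 *v v + B *v d" and "P1 *v d = \<tau> *\<^sub>R (f - A *v v)"
proof
  define d where "d = matrix_inv B *v (P2 *v (w - v))"
  have "B *v (matrix_inv B *v x) = x" for x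
    using pos_def_mat_matrix_inv_mult(1)[OF B] by (simp add: matrix_vector_mul_assoc)
  then show "P2 *v w = P2 *v v + B *v d"
    by (simp add: d_def matrix_vector_mult_diff_distrib)
  have "(1 / \<tau>) *\<^sub>R (P1 *v d) = f - A *v v"
    using scheme unfolding d_def
    by (simp add: matrix_vector_mul_assoc[symmetric] matrix_vector_mult_scaleR algebra_simps)
  then have "\<tau> *\<^sub>R ((1 / \<tau>) *\<^sub>R (P1 *v d)) = \<tau> *\<^sub>R (f - A *v v)"
    by simp
  then show "P1 *v d = \<tau> *\<^sub>R (f - A *v v)"
    using \<open>\<tau> > 0\<close> by simp
qed

theorem mainTheorem1:
  fixes B A1 A2 :: "real^'n^'n"
    and y phi :: "nat \<Rightarrow> real^'n"
    and \<sigma> \<tau> :: real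
  assumes "pos_def_mat B"
    and "pos_semidef_mat A1" and "pos_semidef_mat A2"
    and "\<sigma> \<ge> 1/2" and "\<tau> > 0"
    and scheme: "\<And>n. ((B + (\<sigma> * \<tau>) *\<^sub>R A1) ** matrix_inv B ** (B + (\<sigma> * \<tau>) *\<^sub>R A2))
                     *v ((1 / \<tau>) *\<^sub>R (y (Suc n) - y n)) + (A1 + A2) *v y n = phi n"
  shows "\<forall>n. dnorm (matrix_inv B) ((B + (\<sigma> * \<tau>) *\<^sub>R A2) *v y (Suc n))
           \<le> dnorm (matrix_inv B) ((B + (\<sigma> * \<tau>) *\<^sub>R A2) *v y n) + \<tau> * dnorm (matrix_inv B) (phi n)"
proof
  fix n
  define G where "G = matrix_inv B"
  define P1 where "P1 = B + (\<sigma> * \<tau>) *\<^sub>R A1"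
  define P2 where "P2 = B + (\<sigma> * \<tau>) *\<^sub>R A2"
  obtain d where increment: "P2 *v y (Suc n) = P2 *v y n + B *v d"
    and d: "P1 *v d = \<tau> *\<^sub>R (phi n - (A1 + A2) *v y n)"
    using factorized_scheme_increment[OF assms(1,5) scheme[of n]] unfolding P1_def P2_def by blast
  obtain q where q: "P1 *v q = - \<tau> *\<^sub>R ((A1 + A2) *v y n)"
    and homogeneous: "dnorm G (P2 *v y n + B *v q) \<le> dnorm G (P2 *v y n)"
    using factorized_scheme_homogeneous_step assms(1-5) unfolding G_def P1_def P2_def by metis
  have "P1 *v (d - q) = \<tau> *\<^sub>R phi n"
    unfolding matrix_vector_mult_diff_distrib d q by (simp add: algebra_simps)
  then have source: "dnorm G (B *v (d - q)) \<le> \<tau> * dnorm G (phi n)"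
    using dnorm_matrix_inv_le_shift[OF assms(1,2), of "\<sigma> * \<tau>" "d - q"] assms(4,5)
    by (simp add: G_def P1_def dnorm_scaleR)
  have "P2 *v y (Suc n) = (P2 *v y n + B *v q) + B *v (d - q)"
    by (simp add: increment matrix_vector_mult_diff_distrib)
  then have "dnorm G (P2 *v y (Suc n)) \<le> dnorm G (P2 *v y n + B *v q) + dnorm G (B *v (d - q))"
    unfolding G_def by (simp add: dnorm_triangle pos_def_mat_matrix_inv[OF assms(1)])
  also have "\<dots> \<le> dnorm G (P2 *v y n) + \<tau> * dnorm G (phi n)"
    using homogeneous source by (rule add_mono)
  finally show "dnorm G (P2 *v y (Suc n)) \<le> dnorm G (P2 *v y n) + \<tau> * dnorm G (phi n)" .
qed

end
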